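(* For each $x\in\mathcal I$ and any pair of randomized stopping times with conditional cumulative distribution functions $(\Gamma^1,\Gamma^2)$, $$J^1(x,\Gamma^1,\Gamma^2)\le\sup_{\tau^1\in\mathcal T}J^1(x,\tau^1,\Gamma^2),\qquad J^2(x,\Gamma^1,\Gamma^2)\le\sup_{\tau^2\in\mathcal T}J^2(x,\Gamma^1,\tau^2).$$
   Context: $\mathcal I=(\alpha,\beta)$, $X$ the coordinate process on the canonical space of continuous paths, $\mathbf P_x$ the law under which $X$ solves (weakly, uniquely in law) $\mathrm dX_t=b(X_t)\mathrm dt+\sigma(X_t)\mathrm dW_t$, $X_0=x$, with $b,\sigma$ continuous, $\sigma>0$, natural endpoints. $(\mathcal F_t)$ is the usual augmentation of the natural filtration of $X$, $\mathcal T$ its stopping times. $r>0$; $R^i,G^i$ continuous on $\mathcal I$ with $\mathbf E_x[\sup_te^{-rt}|R^i(X_t)|]<\infty$ and $\mathbf E_x[\sup_te^{-rt}|G^i(X_t)|]<\infty$; convention $f(X_\tau)=0$ on $\{\tau=\infty\}$. A randomized stopping time for player $i$ is an $\mathcal F\otimes\mathcal B([0,1])$-measurable $\gamma^i:\Omega\times[0,1]\to[0,\infty]$ with $\gamma^i(\cdot,u)\in\mathcal T$ for a.e. $u$; its conditional cdf is $\Gamma^i_t=\int_0^11_{\{\gamma^i(\cdot,u)\le t\}}\mathrm du$, $\Lambda^i=1-\Gamma^i$, $\Gamma^i_{0-}=0$; a pure stopping time $\tau\in\mathcal T$ has $\Gamma_t=1_{\{\tau\le t\}}$. Payoffs (with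 $j$ the other player): $J^i(x,\Gamma^1,\Gamma^2)=\mathbf E_x[\int_{[0,\infty)}e^{-rt}R^i(X_t)\Lambda^j_{t-}\mathrm d\Gamma^i_t+\int_{[0,\infty)}e^{-rt}G^i(X_t)\Lambda^i_t\mathrm d\Gamma^j_t]$. *)

theory Defs
  imports "HOL-Probability.Probability"
begin

text \<open>Time runs in ennreal = [0,\<infinity>]; a filtration is F :: ennreal \<Rightarrow> 'a measure and
  stopping times are the library's stopping_time F (values in [0,\<infinity>]).\<close>

definition randomized_stopping_time ::
  "(ennreal \<Rightarrow> 'a measure) \<Rightarrow> 'a measure \<Rightarrow> ('a \<Rightarrow> real \<Rightarrow> ennreal) \<Rightarrow> bool" where
  "randomized_stopping_time F M \<gamma> \<longleftrightarrow>
     (\<lambda>(\<omega>, u). \<gamma> \<omega> u) \<in> borel_measurable (M \<Otimes>\<^sub>M restrict_space borel {0..1::real}) \<and>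
     (AE u in restrict_space lborel {0..1::real}. stopping_time F (\<lambda>\<omega>. \<gamma> \<omega> u))"

text \<open>Conditional cdf Gamma_t(omega) = Leb{u in [0,1]. gamma(omega,u) \<le> t} for t \<ge> 0,
  and 0 for t < 0 (so that Gamma_{0-} = 0).\<close>
definition rst_cdf :: "('a \<Rightarrow> real \<Rightarrow> ennreal) \<Rightarrow> 'a \<Rightarrow> real \<Rightarrow> real" where
  "rst_cdf \<gamma> \<omega> t =
     (if t < 0 then 0 else measure lborel {u \<in> {0..1::real}. \<gamma> \<omega> u \<le> ennreal t})"

definition pure_cdf :: "('a \<Rightarrow> ennreal) \<Rightarrow> 'a \<Rightarrow> real \<Rightarrow> real" where
  "pure_cdf \<tau> \<omega> t = (if 0 \<le> t \<and> \<tau> \<omega> \<le> ennreal t then 1 else 0)"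

definition cdf_left :: "(real \<Rightarrow> real) \<Rightarrow> real \<Rightarrow> real" where
  "cdf_left \<Gamma> t = Lim (at_left t) \<Gamma>"

definition payoff ::
  "(real \<Rightarrow> 'a measure) \<Rightarrow> (real \<Rightarrow> 'a \<Rightarrow> real) \<Rightarrow> real \<Rightarrow> (real \<Rightarrow> real) \<Rightarrow> (real \<Rightarrow> real)
   \<Rightarrow> real \<Rightarrow> ('a \<Rightarrow> real \<Rightarrow> real) \<Rightarrow> ('a \<Rightarrow> real \<Rightarrow> real) \<Rightarrow> real" where
  "payoff P X r R G x Gi Gj =
     (\<integral>\<omega>. (set_lebesgue_integral (interval_measure (Gi \<omega>)) {0..}
              (\<lambda>t. exp (- r * t) * R (X t \<omega>) * (1 - cdf_left (Gj \<omega>) t)))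
          + (set_lebesgue_integral (interval_measure (Gj \<omega>)) {0..}
              (\<lambda>t. exp (- r * t) * G (X t \<omega>) * (1 - Gi \<omega> t))) \<partial>P x)"

end

theory Submission
  imports Defs
begin

text \<open>For a fixed path the payoff is affine in the player's own distribution function. The
  randomised time is the family of times gamma(omega, u) indexed by u in [0,1], and its distribution
  function is that of the law of u |-> gamma(omega, u) under the uniform measure. Changing
  variables, both Stieltjes integrals become integrals over u, so the pathwise payoff of gamma is
  the u-average of the pathwise payoffs of the pure times gamma(omega, u). Integrating over omega
  and applying Fubini, which the integrable envelopes sup_t e^(-rt) |R(X_t)| and
  sup_t e^(-rt) |G(X_t)| justify, the payoff of gamma is the average over u of the payoffs of the
  stopping times gamma(., u), hence at most their supremum.\<close>

lemma finite_enn2real_le_iff: "x < \<top> \<and> enn2real x \<le> t \<longleftrightarrow> 0 \<le> t \<and> x \<le> ennreal t"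
  by (metis enn2real_le enn2real_leI enn2real_less_iff enn2real_nonneg
      ennreal_less_top infinity_ennreal_def le_less less_top not_le)

lemma finite_enn2real_less_iff: "x < \<top> \<and> enn2real x < t \<longleftrightarrow> x < ennreal t"
  by (metis enn2real_less_iff top.extremum_strict top.not_eq_extremum)

lemma borel_measurable_enn2real_compose:
  assumes "f \<in> borel_measurable (restrict_space borel {0..})" "T \<in> borel_measurable M"
  shows "(\<lambda>x. f (enn2real (T x)) :: real) \<in> borel_measurable M"
  by (rule measurable_compose[OF measurable_restrict_space2 assms(1)]) (use assms(2) in auto)

lemma (in prob_space) abs_integral_le_const:
  fixes f :: "'a \<Rightarrow> real"
  assumes "\<And>x. x \<in> space M \<Longrightarrow> \<bar>f x\<bar> \<le> B"
  shows "\<bar>\<integral>x. f x \<partial>M\<bar> \<le> B"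
proof (cases "integrable M f")
  case True
  have "\<bar>\<integral>x. f x \<partial>M\<bar> \<le> (\<integral>x. \<bar>f x\<bar> \<partial>M)"
    by (rule integral_abs_bound)
  also have "\<dots> \<le> B"
    using True assms by (intro integral_le_const) auto
  finally show ?thesis .
next
  case False
  obtain x where "x \<in> space M"
    using not_empty by blast
  with assms[of x] False show ?thesis
    by (simp add: not_integrable_integral_eq)
qed

lemma (in prob_space) abs_mult_prob_le: "\<bar>c\<bar> \<le> B \<Longrightarrow> \<bar>c * prob A\<bar> \<le> B"
  using mult_left_le[of "prob A" "\<bar>c\<bar>"] by (simp add: abs_mult)

lemma (in prob_space) ereal_integral_le:
  fixes f :: "'a \<Rightarrow> real"
  assumes f: "integrable M f" and le: "AE x in M. ereal (f x) \<le> c"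
  shows "ereal (\<integral>x. f x \<partial>M) \<le> c"
proof (cases c)
  case (real b)
  have "(\<integral>x. f x \<partial>M) \<le> b"
    using le by (intro integral_le_const[OF f]) (simp add: real)
  then show ?thesis
    by (simp add: real)
next
  case MInf
  with le have "AE x in M. False"
    by simp
  then show ?thesis
    by (simp add: AE_False)
qed simp

lemma integrable_pair_measure_dominated_fst:
  fixes f :: "'a \<times> 'b \<Rightarrow> 'c::{banach, second_countable_topology}"
  assumes "prob_space N"
    and f: "f \<in> borel_measurable (M \<Otimes>\<^sub>M N)"
    and B: "B \<in> borel_measurable M" "(\<integral>\<^sup>+x. B x \<partial>M) < \<infinity>"
    and bound: "\<And>x y. x \<in> space M \<Longrightarrow> y \<in> space N \<Longrightarrow> ennreal (norm (f (x, y))) \<le> B x"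
  shows "integrable (M \<Otimes>\<^sub>M N) f"
  unfolding integrable_iff_bounded
proof
  interpret N: prob_space N by fact
  have "(\<integral>\<^sup>+z. ennreal (norm (f z)) \<partial>(M \<Otimes>\<^sub>M N)) \<le> (\<integral>\<^sup>+z. B (fst z) \<partial>(M \<Otimes>\<^sub>M N))"
    by (intro nn_integral_mono) (auto simp: space_pair_measure bound)
  also have "\<dots> = (\<integral>\<^sup>+x. \<integral>\<^sup>+y. B x \<partial>N \<partial>M)"
    using B(1) N.nn_integral_fst[of "\<lambda>z. B (fst z)" M] by simp
  also have "\<dots> = (\<integral>\<^sup>+x. B x \<partial>M)"
    by (simp add: N.emeasure_space_1)
  finally show "(\<integral>\<^sup>+z. ennreal (norm (f z)) \<partial>(M \<Otimes>\<^sub>M N)) < \<infinity>"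
    using B(2) by (rule le_less_trans)
qed (rule f)

section \<open>Processes with continuous paths\<close>

lemma ceiling_grid_ge: "t \<le> real_of_int \<lceil>t * real (Suc k)\<rceil> / real (Suc k)"
  by (simp add: pos_le_divide_eq)

lemma ceiling_grid_LIMSEQ: "(\<lambda>k. real_of_int \<lceil>t * real (Suc k)\<rceil> / real (Suc k)) \<longlonglongrightarrow> t"
proof (rule tendsto_sandwich[of "\<lambda>_. t" _ _ "\<lambda>k. t + 1 / real (Suc k)"])
  have "real_of_int \<lceil>t * real (Suc k)\<rceil> / real (Suc k) \<le> t + 1 / real (Suc k)" for k :: nat
    using ceiling_correct[of "t * real (Suc k)"] by (simp add: divide_simps)
  then show "\<forall>\<^sub>F k in sequentially. real_of_int \<lceil>t * real (Suc k)\<rceil> / real (Suc k) \<le> t + 1 / real (Suc k)"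
    by simp
  show "(\<lambda>k. t + 1 / real (Suc k)) \<longlonglongrightarrow> t"
    using tendsto_add[OF tendsto_const LIMSEQ_inverse_real_of_nat, of t] by (simp add: inverse_eq_divide)
  show "\<forall>\<^sub>F k in sequentially. t \<le> real_of_int \<lceil>t * real (Suc k)\<rceil> / real (Suc k)"
    by (intro always_eventually allI ceiling_grid_ge)
qed simp

lemma borel_measurable_continuous_process:
  fixes Z :: "real \<Rightarrow> 'a \<Rightarrow> real"
  assumes Z: "\<And>t. 0 \<le> t \<Longrightarrow> Z t \<in> borel_measurable M"
    and cont: "\<And>\<omega>. \<omega> \<in> space M \<Longrightarrow> continuous_on {0..} (\<lambda>t. Z t \<omega>)"
  shows "(\<lambda>(\<omega>, t). Z t \<omega>) \<in> borel_measurable (M \<Otimes>\<^sub>M restrict_space borel {0..})"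
proof (rule borel_measurable_LIMSEQ_real)
  \<comment> \<open>Approximate t from above by grid points, which take only countably many values.\<close>
  define q where "q k t = real_of_int \<lceil>t * real (Suc k)\<rceil> / real (Suc k)" for k t
  show "(\<lambda>k. Z (max 0 (q k (snd z))) (fst z)) \<longlonglongrightarrow> (case z of (\<omega>, t) \<Rightarrow> Z t \<omega>)"
    if "z \<in> space (M \<Otimes>\<^sub>M restrict_space borel {0..})" for z
  proof -
    from that have z: "fst z \<in> space M" "0 \<le> snd z"
      by (auto simp: space_pair_measure)
    then have "0 \<le> q k (snd z)" for k
      using ceiling_grid_ge[of "snd z" k] unfolding q_def by linarith
    then have "(\<lambda>k. Z (q k (snd z)) (fst z)) \<longlonglongrightarrow> Z (snd z) (fst z)"
      using z ceiling_grid_LIMSEQ[of "snd z"] unfolding q_def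
      by (intro continuous_on_tendsto_compose[OF cont]) auto
    with \<open>\<And>k. 0 \<le> q k (snd z)\<close> show ?thesis
      by (simp add: split_beta)
  qed
  show "(\<lambda>z. Z (max 0 (q k (snd z))) (fst z)) \<in> borel_measurable (M \<Otimes>\<^sub>M restrict_space borel {0..})" for k
  proof -
    have "(\<lambda>z. (\<lambda>i::int. Z (max 0 (i / real (Suc k))) (fst z)) \<lceil>snd z * real (Suc k)\<rceil>)
        \<in> borel_measurable (M \<Otimes>\<^sub>M restrict_space borel {0..})"
    proof (rule measurable_compose_countable[where f="\<lambda>i z. Z (max 0 (real_of_int i / real (Suc k))) (fst z)"
          and g="\<lambda>z. \<lceil>snd z * real (Suc k)\<rceil>"])
      show "(\<lambda>z. Z (max 0 (i / real (Suc k))) (fst z)) \<in> borel_measurable (M \<Otimes>\<^sub>M restrict_space borel {0..})"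
        for i :: int
        using measurable_compose[OF measurable_fst Z[of "max 0 (i / real (Suc k))"]] by simp
      show "(\<lambda>z. \<lceil>snd z * real (Suc k)\<rceil>) \<in> measurable (M \<Otimes>\<^sub>M restrict_space borel {0..}) (count_space UNIV)"
      proof -
        have [measurable]: "snd \<in> borel_measurable (M \<Otimes>\<^sub>M restrict_space borel {0::real..})"
          by (rule measurable_compose[OF measurable_snd measurable_restrict_space1]) simp
        show ?thesis
          by measurable
      qed
    qed
    then show ?thesis
      by (simp add: q_def)
  qed
qed

lemma SUP_nonneg_Rats_eq_SUP_nonneg:
  fixes f :: "real \<Rightarrow> real"
  assumes f: "continuous_on {0..} f"
  shows "(SUP q\<in>{q\<in>\<rat>. 0 \<le> q}. ennreal (f q)) = (SUP t\<in>{0..}. ennreal (f t))"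
proof (rule antisym)
  show "(SUP q\<in>{q\<in>\<rat>. 0 \<le> q}. ennreal (f q)) \<le> (SUP t\<in>{0..}. ennreal (f t))"
    by (rule SUP_subset_mono) auto
  show "(SUP t\<in>{0..}. ennreal (f t)) \<le> (SUP q\<in>{q\<in>\<rat>. 0 \<le> q}. ennreal (f q))"
  proof (rule SUP_least)
    fix t :: real assume "t \<in> {0..}"
    define q where "q k = real_of_int \<lceil>t * real (Suc k)\<rceil> / real (Suc k)" for k
    have q: "q k \<in> {q\<in>\<rat>. 0 \<le> q}" for k
      using \<open>t \<in> {0..}\<close> ceiling_grid_ge[of t k] by (auto simp: q_def)
    have "(\<lambda>k. f (q k)) \<longlonglongrightarrow> f t"
      using q \<open>t \<in> {0..}\<close> ceiling_grid_LIMSEQ[of t] unfolding q_def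
      by (intro continuous_on_tendsto_compose[OF f]) auto
    then have "(\<lambda>k. ennreal (f (q k))) \<longlonglongrightarrow> ennreal (f t)"
      by (rule tendsto_ennrealI)
    then show "ennreal (f t) \<le> (SUP q\<in>{q\<in>\<rat>. 0 \<le> q}. ennreal (f q))"
      by (rule LIMSEQ_le_const2) (use q in \<open>auto intro!: exI[of _ 0] SUP_upper\<close>)
  qed
qed

section \<open>Distribution functions of randomised times\<close>

definition uniform01 :: "real measure" where
  "uniform01 = restrict_space lborel {0..1}"

lemma prob_space_uniform01: "prob_space uniform01"
  by (intro prob_spaceI) (simp add: uniform01_def emeasure_restrict_space)

interpretation uniform01: prob_space uniform01
  by (rule prob_space_uniform01)

lemma measure_uniform01_const: "measure uniform01 {u \<in> space uniform01. P} = (if P then 1 else 0)"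
  using uniform01.prob_space by simp

lemma sets_uniform01: "sets uniform01 = sets (restrict_space borel {0..1})"
  unfolding uniform01_def by (intro sets_restrict_space_cong) simp

definition cdf_unif01 :: "(real \<Rightarrow> ennreal) \<Rightarrow> real \<Rightarrow> real" where
  "cdf_unif01 T t = (if t < 0 then 0 else measure lborel {u \<in> {0..1::real}. T u \<le> ennreal t})"

lemma rst_cdf_eq_cdf_unif01: "rst_cdf \<gamma> \<omega> = cdf_unif01 (\<gamma> \<omega>)"
  by (simp add: fun_eq_iff rst_cdf_def cdf_unif01_def)

lemma pure_cdf_eq_cdf_unif01: "pure_cdf \<tau> \<omega> = cdf_unif01 (\<lambda>u. \<tau> \<omega>)"
  by (simp add: fun_eq_iff pure_cdf_def cdf_unif01_def del: atLeastAtMost_iff)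

definition finite_law :: "(real \<Rightarrow> ennreal) \<Rightarrow> real measure" where
  "finite_law T =
     distr (density uniform01 (\<lambda>u. ennreal (indicator {u. T u < \<infinity>} u))) borel (\<lambda>u. enn2real (T u))"

lemma
  assumes [measurable]: "T \<in> borel_measurable uniform01" "A \<in> sets borel"
  shows emeasure_finite_law:
      "emeasure (finite_law T) A = emeasure uniform01 {u \<in> space uniform01. T u < \<infinity> \<and> enn2real (T u) \<in> A}"
    and measure_finite_law:
      "measure (finite_law T) A = measure uniform01 {u \<in> space uniform01. T u < \<infinity> \<and> enn2real (T u) \<in> A}"
proof -
  have "(\<lambda>u. enn2real (T u)) -` A \<inter> space uniform01 \<in> sets uniform01"
    by measurable
  then have "emeasure (finite_law T) A
      = (\<integral>\<^sup>+u. indicator {u. T u < \<infinity>} u * indicator ((\<lambda>u. enn2real (T u)) -` A \<inter> space uniform01) u \<partial>uniform01)"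
    unfolding finite_law_def by (simp add: emeasure_distr emeasure_density ennreal_indicator)
  also have "\<dots> = (\<integral>\<^sup>+u. indicator {u \<in> space uniform01. T u < \<infinity> \<and> enn2real (T u) \<in> A} u \<partial>uniform01)"
    by (intro nn_integral_cong) (auto split: split_indicator)
  also have "\<dots> = emeasure uniform01 {u \<in> space uniform01. T u < \<infinity> \<and> enn2real (T u) \<in> A}"
    by (intro nn_integral_indicator) measurable
  finally show "emeasure (finite_law T) A = \<dots>" .
  then show "measure (finite_law T) A = measure uniform01 {u \<in> space uniform01. T u < \<infinity> \<and> enn2real (T u) \<in> A}"
    by (simp add: measure_def)
qed

lemma finite_borel_measure_finite_law:
  assumes [measurable]: "T \<in> borel_measurable uniform01"
  shows "finite_borel_measure (finite_law T)"
proof -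
  have "emeasure (finite_law T) UNIV
      = emeasure uniform01 {u \<in> space uniform01. T u < \<infinity> \<and> enn2real (T u) \<in> UNIV}"
    by (rule emeasure_finite_law) simp_all
  also have "\<dots> \<le> emeasure uniform01 (space uniform01)"
    by (rule emeasure_space)
  finally have "finite_measure (finite_law T)"
    by (intro finite_measureI) (auto simp: finite_law_def top_unique uniform01.emeasure_space_1)
  then show ?thesis
    by (simp add: finite_borel_measure_def finite_borel_measure_axioms_def finite_law_def)
qed

lemma cdf_finite_law:
  assumes [measurable]: "T \<in> borel_measurable uniform01"
  shows "cdf (finite_law T) = cdf_unif01 T"
proof
  fix t :: real
  have "cdf (finite_law T) t = measure uniform01 {u \<in> space uniform01. 0 \<le> t \<and> T u \<le> ennreal t}"
    by (simp add: cdf_def measure_finite_law finite_enn2real_le_iff)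
  also have "\<dots> = cdf_unif01 T t"
  proof (cases "t < 0")
    case False
    have "{u \<in> space uniform01. T u \<le> ennreal t} \<in> sets uniform01"
      by measurable
    then have "{u \<in> {0..1}. T u \<le> ennreal t} \<in> sets lborel"
      by (simp add: uniform01_def sets_restrict_space_iff)
    then show ?thesis
      using False unfolding uniform01_def by (subst measure_restrict_space) (auto simp: cdf_unif01_def)
  qed (simp add: cdf_unif01_def)
  finally show "cdf (finite_law T) t = cdf_unif01 T t" .
qed

lemma interval_measure_cdf_unif01:
  assumes T: "T \<in> borel_measurable uniform01"
  shows "interval_measure (cdf_unif01 T) = finite_law T"
proof -
  interpret finite_borel_measure "finite_law T"
    using T by (rule finite_borel_measure_finite_law)
  have "finite_borel_measure (interval_measure (cdf (finite_law T)))"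
    by (rule finite_borel_measure_interval_measure[OF cdf_nondecreasing cdf_is_right_cont
          cdf_lim_at_bot cdf_lim_at_top]) (auto simp: measure_nonneg)
  moreover have "cdf (interval_measure (cdf (finite_law T))) = cdf (finite_law T)"
    by (rule cdf_interval_measure[OF cdf_nondecreasing cdf_is_right_cont cdf_lim_at_bot])
  ultimately show ?thesis
    unfolding cdf_finite_law[OF T, symmetric] by (rule cdf_unique'[OF _ finite_borel_measure_axioms])
qed

lemma cdf_left_cdf_unif01:
  assumes [measurable]: "T \<in> borel_measurable uniform01"
  shows "cdf_left (cdf_unif01 T) t = measure uniform01 {u \<in> space uniform01. T u < ennreal t}"
proof -
  interpret finite_borel_measure "finite_law T"
    by (rule finite_borel_measure_finite_law) measurable
  have "(cdf_unif01 T \<longlongrightarrow> measure (finite_law T) {..<t}) (at_left t)"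
    using cdf_at_left by (simp add: cdf_finite_law)
  then have "cdf_left (cdf_unif01 T) t = measure (finite_law T) {..<t}"
    unfolding cdf_left_def by (intro tendsto_Lim) (auto simp: trivial_limit_at_left_real)
  then show ?thesis
    by (simp add: measure_finite_law finite_enn2real_less_iff)
qed

lemma one_minus_cdf_left_cdf_unif01:
  assumes [measurable]: "T \<in> borel_measurable uniform01"
  shows "1 - cdf_left (cdf_unif01 T) t = measure uniform01 {u \<in> space uniform01. ennreal t \<le> T u}"
proof -
  have "1 - cdf_left (cdf_unif01 T) t = 1 - measure uniform01 {u \<in> space uniform01. T u < ennreal t}"
    unfolding cdf_left_cdf_unif01[OF assms] ..
  also have "\<dots> = measure uniform01 (space uniform01 - {u \<in> space uniform01. T u < ennreal t})"
    by (rule uniform01.prob_compl[symmetric]) measurable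
  also have "space uniform01 - {u \<in> space uniform01. T u < ennreal t} = {u \<in> space uniform01. ennreal t \<le> T u}"
    by auto
  finally show ?thesis .
qed

lemma one_minus_cdf_unif01:
  assumes [measurable]: "T \<in> borel_measurable uniform01" and "0 \<le> t"
  shows "1 - cdf_unif01 T t = measure uniform01 {u \<in> space uniform01. ennreal t < T u}"
proof -
  have "cdf_unif01 T t = measure uniform01 {u \<in> space uniform01. T u \<le> ennreal t}"
    using assms(2) by (simp add: cdf_finite_law[symmetric] cdf_def measure_finite_law finite_enn2real_le_iff)
  then have "1 - cdf_unif01 T t = 1 - measure uniform01 {u \<in> space uniform01. T u \<le> ennreal t}"
    by simp
  also have "\<dots> = measure uniform01 (space uniform01 - {u \<in> space uniform01. T u \<le> ennreal t})"
    by (rule uniform01.prob_compl[symmetric]) measurable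
  also have "space uniform01 - {u \<in> space uniform01. T u \<le> ennreal t} = {u \<in> space uniform01. ennreal t < T u}"
    by auto
  finally show ?thesis .
qed

lemma mono_cdf_unif01:
  assumes "T \<in> borel_measurable uniform01"
  shows "mono (cdf_unif01 T)"
proof -
  interpret finite_borel_measure "finite_law T"
    using assms by (rule finite_borel_measure_finite_law)
  show ?thesis
    using cdf_nondecreasing by (auto intro: monoI simp: cdf_finite_law[OF assms, symmetric])
qed

lemma mono_cdf_left_cdf_unif01:
  assumes [measurable]: "T \<in> borel_measurable uniform01"
  shows "mono (cdf_left (cdf_unif01 T))"
proof (rule monoI)
  fix s t :: real assume "s \<le> t"
  then have "{u \<in> space uniform01. T u < ennreal s} \<subseteq> {u \<in> space uniform01. T u < ennreal t}"
    using ennreal_leI order.strict_trans2 by blast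
  then show "cdf_left (cdf_unif01 T) s \<le> cdf_left (cdf_unif01 T) t"
    unfolding cdf_left_cdf_unif01[OF assms] by (intro uniform01.finite_measure_mono) measurable
qed

lemma set_integral_cdf_unif01:
  fixes f :: "real \<Rightarrow> real"
  assumes [measurable]: "T \<in> borel_measurable uniform01"
    and f: "f \<in> borel_measurable (restrict_space borel {0..})"
  shows "set_lebesgue_integral (interval_measure (cdf_unif01 T)) {0..} f
       = (\<integral>u. (if T u < \<infinity> then f (enn2real (T u)) else 0) \<partial>uniform01)"
proof -
  define g where "g t = indicator {0..} t * f t" for t
  have g[measurable]: "g \<in> borel_measurable borel"
    using f unfolding g_def by (simp add: borel_measurable_restrict_space_iff mult.commute)
  have "set_lebesgue_integral (interval_measure (cdf_unif01 T)) {0..} f = integral\<^sup>L (finite_law T) g"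
    unfolding interval_measure_cdf_unif01[OF assms(1)] set_lebesgue_integral_def g_def by simp
  also have "\<dots> = (\<integral>u. g (enn2real (T u)) \<partial>density uniform01 (\<lambda>u. ennreal (indicator {u. T u < \<infinity>} u)))"
    unfolding finite_law_def by (rule integral_distr) simp_all
  also have "\<dots> = (\<integral>u. indicator {u. T u < \<infinity>} u *\<^sub>R g (enn2real (T u)) \<partial>uniform01)"
    by (rule integral_density) measurable
  also have "\<dots> = (\<integral>u. (if T u < \<infinity> then f (enn2real (T u)) else 0) \<partial>uniform01)"
    by (intro Bochner_Integration.integral_cong) (auto simp: g_def indicator_def)
  finally show ?thesis .
qed

section \<open>The payoff along a single path\<close>

definition pathwise_payoff :: "(real \<Rightarrow> real) \<Rightarrow> (real \<Rightarrow> real) \<Rightarrow> (real \<Rightarrow> real) \<Rightarrow> (real \<Rightarrow> real) \<Rightarrow> real" where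
  "pathwise_payoff g h C D =
     set_lebesgue_integral (interval_measure C) {0..} (\<lambda>t. g t * (1 - cdf_left D t))
   + set_lebesgue_integral (interval_measure D) {0..} (\<lambda>t. h t * (1 - C t))"

lemma payoff_eq_integral_pathwise_payoff:
  "payoff P X r R G x Gi Gj =
     (\<integral>\<omega>. pathwise_payoff (\<lambda>t. exp (- r * t) * R (X t \<omega>)) (\<lambda>t. exp (- r * t) * G (X t \<omega>))
            (Gi \<omega>) (Gj \<omega>) \<partial>P x)"
  by (simp add: payoff_def pathwise_payoff_def)

lemma pathwise_payoff_cdf_unif01:
  assumes [measurable]: "T \<in> borel_measurable uniform01" "T' \<in> borel_measurable uniform01"
    and [measurable]: "g \<in> borel_measurable (restrict_space borel {0..})"
      "h \<in> borel_measurable (restrict_space borel {0..})"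
  shows "pathwise_payoff g h (cdf_unif01 T) (cdf_unif01 T') =
     (\<integral>u. (if T u < \<infinity> then g (enn2real (T u)) * measure uniform01 {v \<in> space uniform01. T u \<le> T' v} else 0)
        \<partial>uniform01)
   + (\<integral>v. (if T' v < \<infinity> then h (enn2real (T' v)) * measure uniform01 {u \<in> space uniform01. T' v < T u} else 0)
        \<partial>uniform01)"
proof -
  have [measurable]: "cdf_left (cdf_unif01 T') \<in> borel_measurable borel"
    by (rule borel_measurable_mono[OF mono_cdf_left_cdf_unif01]) measurable
  have [measurable]: "cdf_unif01 T \<in> borel_measurable borel"
    by (rule borel_measurable_mono[OF mono_cdf_unif01]) measurable
  have [measurable]: "(\<lambda>t. t) \<in> borel_measurable (restrict_space borel {0::real..})"
    by (intro measurable_restrict_space1 measurable_ident_sets) simp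
  have "set_lebesgue_integral (interval_measure (cdf_unif01 T)) {0..} (\<lambda>t. g t * (1 - cdf_left (cdf_unif01 T') t))
     = (\<integral>u. (if T u < \<infinity> then g (enn2real (T u)) * (1 - cdf_left (cdf_unif01 T') (enn2real (T u))) else 0)
        \<partial>uniform01)"
    by (rule set_integral_cdf_unif01) measurable
  also have "\<dots> = (\<integral>u. (if T u < \<infinity> then g (enn2real (T u)) * measure uniform01 {v \<in> space uniform01. T u \<le> T' v} else 0)
        \<partial>uniform01)"
    by (intro Bochner_Integration.integral_cong refl) (simp add: one_minus_cdf_left_cdf_unif01)
  finally have own: "set_lebesgue_integral (interval_measure (cdf_unif01 T)) {0..} (\<lambda>t. g t * (1 - cdf_left (cdf_unif01 T') t))
     = (\<integral>u. (if T u < \<infinity> then g (enn2real (T u)) * measure uniform01 {v \<in> space uniform01. T u \<le> T' v} else 0)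
        \<partial>uniform01)" .
  have "set_lebesgue_integral (interval_measure (cdf_unif01 T')) {0..} (\<lambda>t. h t * (1 - cdf_unif01 T t))
     = (\<integral>v. (if T' v < \<infinity> then h (enn2real (T' v)) * (1 - cdf_unif01 T (enn2real (T' v))) else 0)
        \<partial>uniform01)"
    by (rule set_integral_cdf_unif01) measurable
  also have "\<dots> = (\<integral>v. (if T' v < \<infinity> then h (enn2real (T' v)) * measure uniform01 {u \<in> space uniform01. T' v < T u} else 0)
        \<partial>uniform01)"
    by (intro Bochner_Integration.integral_cong refl) (simp add: one_minus_cdf_unif01)
  finally show ?thesis
    by (simp add: pathwise_payoff_def own)
qed

lemma pathwise_payoff_pure:
  assumes [measurable]: "T' \<in> borel_measurable uniform01"
    and [measurable]: "g \<in> borel_measurable (restrict_space borel {0..})"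
      "h \<in> borel_measurable (restrict_space borel {0..})"
  shows "pathwise_payoff g h (cdf_unif01 (\<lambda>u. s)) (cdf_unif01 T') =
     (if s < \<infinity> then g (enn2real s) * measure uniform01 {v \<in> space uniform01. s \<le> T' v} else 0)
   + (\<integral>v. (if T' v < \<infinity> \<and> T' v < s then h (enn2real (T' v)) else 0) \<partial>uniform01)"
  by (subst pathwise_payoff_cdf_unif01)
    (auto simp: measure_uniform01_const uniform01.prob_space intro!: Bochner_Integration.integral_cong)

lemma abs_pathwise_payoff_le:
  assumes [measurable]: "T \<in> borel_measurable uniform01" "T' \<in> borel_measurable uniform01"
    and [measurable]: "g \<in> borel_measurable (restrict_space borel {0..})"
      "h \<in> borel_measurable (restrict_space borel {0..})"
    and g: "\<And>t. 0 \<le> t \<Longrightarrow> \<bar>g t\<bar> \<le> Bg" and h: "\<And>t. 0 \<le> t \<Longrightarrow> \<bar>h t\<bar> \<le> Bh"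
  shows "\<bar>pathwise_payoff g h (cdf_unif01 T) (cdf_unif01 T')\<bar> \<le> Bg + Bh"
proof -
  have "\<bar>\<integral>u. (if T u < \<infinity> then g (enn2real (T u)) * measure uniform01 {v \<in> space uniform01. T u \<le> T' v} else 0)
        \<partial>uniform01\<bar> \<le> Bg"
    using g[of 0] by (intro uniform01.abs_integral_le_const) (auto intro!: uniform01.abs_mult_prob_le g)
  moreover have "\<bar>\<integral>v. (if T' v < \<infinity> then h (enn2real (T' v)) * measure uniform01 {u \<in> space uniform01. T' v < T u} else 0)
        \<partial>uniform01\<bar> \<le> Bh"
    using h[of 0] by (intro uniform01.abs_integral_le_const) (auto intro!: uniform01.abs_mult_prob_le h)
  ultimately show ?thesis
    by (simp add: pathwise_payoff_cdf_unif01)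
qed

lemma pathwise_payoff_mixture:
  assumes [measurable]: "T \<in> borel_measurable uniform01" "T' \<in> borel_measurable uniform01"
    and [measurable]: "g \<in> borel_measurable (restrict_space borel {0..})"
      "h \<in> borel_measurable (restrict_space borel {0..})"
    and g: "\<And>t. 0 \<le> t \<Longrightarrow> \<bar>g t\<bar> \<le> Bg" and h: "\<And>t. 0 \<le> t \<Longrightarrow> \<bar>h t\<bar> \<le> Bh"
  shows "pathwise_payoff g h (cdf_unif01 T) (cdf_unif01 T') =
     (\<integral>u. pathwise_payoff g h (cdf_unif01 (\<lambda>v. T u)) (cdf_unif01 T') \<partial>uniform01)"
proof -
  \<comment> \<open>The own term is already an average over u; the opponent's term becomes one after
    exchanging the two integrations over [0,1].\<close>
  interpret pair_prob_space uniform01 uniform01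
    by (simp add: pair_prob_space_def pair_sigma_finite_def prob_space_uniform01 prob_space_imp_sigma_finite)
  define a where
    "a u = (if T u < \<infinity> then g (enn2real (T u)) * measure uniform01 {v \<in> space uniform01. T u \<le> T' v} else 0)"
    for u
  define k where "k u v = (if T' v < \<infinity> \<and> T' v < T u then h (enn2real (T' v)) else 0)" for u v
  have [measurable]: "(\<lambda>u. g (enn2real (T u))) \<in> borel_measurable uniform01"
    "(\<lambda>v. h (enn2real (T' v))) \<in> borel_measurable uniform01"
    by (simp_all add: borel_measurable_enn2real_compose)
  have [measurable]: "a \<in> borel_measurable uniform01"
    unfolding a_def by measurable
  have k_meas: "case_prod k \<in> borel_measurable (uniform01 \<Otimes>\<^sub>M uniform01)"
    unfolding k_def by measurable
  have "integrable uniform01 a"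
    using g[of 0] by (intro uniform01.integrable_const_bound[where B=Bg])
      (auto simp: a_def intro!: uniform01.abs_mult_prob_le g)
  have k_int: "integrable (uniform01 \<Otimes>\<^sub>M uniform01) (case_prod k)"
    using h[of 0] k_meas
    by (intro P.integrable_const_bound[where B=Bh]) (auto simp: k_def split: prod.split intro!: h)
  have "(\<integral>u. pathwise_payoff g h (cdf_unif01 (\<lambda>v. T u)) (cdf_unif01 T') \<partial>uniform01)
      = (\<integral>u. a u + (\<integral>v. k u v \<partial>uniform01) \<partial>uniform01)"
    by (intro Bochner_Integration.integral_cong) (simp_all add: pathwise_payoff_pure a_def k_def)
  also have "\<dots> = (\<integral>u. a u \<partial>uniform01) + (\<integral>u. \<integral>v. k u v \<partial>uniform01 \<partial>uniform01)"
    using \<open>integrable uniform01 a\<close> integrable_fst'[OF k_int] by simp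
  also have "(\<integral>u. \<integral>v. k u v \<partial>uniform01 \<partial>uniform01) = (\<integral>v. \<integral>u. k u v \<partial>uniform01 \<partial>uniform01)"
    using Fubini_integral[OF k_int] by simp
  also have "\<dots> = (\<integral>v. (if T' v < \<infinity> then h (enn2real (T' v)) * measure uniform01 {u \<in> space uniform01. T' v < T u} else 0)
        \<partial>uniform01)"
  proof (intro Bochner_Integration.integral_cong refl)
    fix v
    have "(\<integral>u. k u v \<partial>uniform01)
        = (\<integral>u. indicator {u \<in> space uniform01. T' v < T u} u * (if T' v < \<infinity> then h (enn2real (T' v)) else 0) \<partial>uniform01)"
      by (intro Bochner_Integration.integral_cong) (auto simp: k_def)
    then show "(\<integral>u. k u v \<partial>uniform01)
        = (if T' v < \<infinity> then h (enn2real (T' v)) * measure uniform01 {u \<in> space uniform01. T' v < T u} else 0)"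
      by simp
  qed
  finally show ?thesis
    by (simp add: pathwise_payoff_cdf_unif01 a_def)
qed

lemma borel_measurable_pathwise_payoff:
  assumes T: "(\<lambda>(z, u). T z u) \<in> borel_measurable (N \<Otimes>\<^sub>M uniform01)"
    and T': "(\<lambda>(z, u). T' z u) \<in> borel_measurable (N \<Otimes>\<^sub>M uniform01)"
    and g: "(\<lambda>(z, t). g z t) \<in> borel_measurable (N \<Otimes>\<^sub>M restrict_space borel {0..})"
    and h: "(\<lambda>(z, t). h z t) \<in> borel_measurable (N \<Otimes>\<^sub>M restrict_space borel {0..})"
  shows "(\<lambda>z. pathwise_payoff (g z) (h z) (cdf_unif01 (T z)) (cdf_unif01 (T' z))) \<in> borel_measurable N"
proof -
  have [measurable (raw)]:
    "(\<lambda>x. T (f x) (u x)) \<in> borel_measurable L" "(\<lambda>x. T' (f x) (u x)) \<in> borel_measurable L"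
    if "f \<in> measurable L N" "u \<in> measurable L uniform01" for f u and L :: "'c measure"
    using measurable_compose[OF measurable_Pair[OF that] T] measurable_compose[OF measurable_Pair[OF that] T']
    by simp_all
  have [measurable (raw)]:
    "(\<lambda>x. g (f x) (enn2real (S x))) \<in> borel_measurable L" "(\<lambda>x. h (f x) (enn2real (S x))) \<in> borel_measurable L"
    if "f \<in> measurable L N" "S \<in> borel_measurable L" for f S and L :: "'c measure"
  proof -
    have "(\<lambda>x. (f x, enn2real (S x))) \<in> measurable L (N \<Otimes>\<^sub>M restrict_space borel {0..})"
      using that by (auto intro!: measurable_Pair measurable_restrict_space2)
    from measurable_compose[OF this g] measurable_compose[OF this h]
    show "(\<lambda>x. g (f x) (enn2real (S x))) \<in> borel_measurable L" "(\<lambda>x. h (f x) (enn2real (S x))) \<in> borel_measurable L"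
      by simp_all
  qed
  have sections: "T z \<in> borel_measurable uniform01" "T' z \<in> borel_measurable uniform01"
    "g z \<in> borel_measurable (restrict_space borel {0..})" "h z \<in> borel_measurable (restrict_space borel {0..})"
    if "z \<in> space N" for z
    using measurable_Pair2[OF T that] measurable_Pair2[OF T' that] measurable_Pair2[OF g that]
      measurable_Pair2[OF h that] by simp_all
  have "(\<lambda>z. (\<integral>u. (if T z u < \<infinity> then g z (enn2real (T z u)) * measure uniform01 {v \<in> space uniform01. T z u \<le> T' z v} else 0)
          \<partial>uniform01)
     + (\<integral>v. (if T' z v < \<infinity> then h z (enn2real (T' z v)) * measure uniform01 {u \<in> space uniform01. T' z v < T z u} else 0)
          \<partial>uniform01)) \<in> borel_measurable N"
    by measurable
  then show ?thesis
    by (rule measurable_cong[THEN iffD1, rotated]) (simp add: pathwise_payoff_cdf_unif01 sections)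
qed

section \<open>Randomisation does not improve the payoff\<close>

locale randomized_payoff =
  fixes Q :: "'a measure" and \<gamma> \<gamma>' :: "'a \<Rightarrow> real \<Rightarrow> ennreal"
    and g h :: "'a \<Rightarrow> real \<Rightarrow> real" and Bg Bh :: "'a \<Rightarrow> ennreal"
  assumes prob_space_Q: "prob_space Q"
    and \<gamma>[measurable]: "(\<lambda>(\<omega>, u). \<gamma> \<omega> u) \<in> borel_measurable (Q \<Otimes>\<^sub>M uniform01)"
    and \<gamma>'[measurable]: "(\<lambda>(\<omega>, u). \<gamma>' \<omega> u) \<in> borel_measurable (Q \<Otimes>\<^sub>M uniform01)"
    and g[measurable]: "(\<lambda>(\<omega>, t). g \<omega> t) \<in> borel_measurable (Q \<Otimes>\<^sub>M restrict_space borel {0..})"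
    and h[measurable]: "(\<lambda>(\<omega>, t). h \<omega> t) \<in> borel_measurable (Q \<Otimes>\<^sub>M restrict_space borel {0..})"
    and Bg[measurable]: "Bg \<in> borel_measurable Q" and integral_Bg: "(\<integral>\<^sup>+\<omega>. Bg \<omega> \<partial>Q) < \<infinity>"
    and g_le: "\<And>\<omega> t. \<omega> \<in> space Q \<Longrightarrow> 0 \<le> t \<Longrightarrow> ennreal \<bar>g \<omega> t\<bar> \<le> Bg \<omega>"
    and Bh[measurable]: "Bh \<in> borel_measurable Q" and integral_Bh: "(\<integral>\<^sup>+\<omega>. Bh \<omega> \<partial>Q) < \<infinity>"
    and h_le: "\<And>\<omega> t. \<omega> \<in> space Q \<Longrightarrow> 0 \<le> t \<Longrightarrow> ennreal \<bar>h \<omega> t\<bar> \<le> Bh \<omega>"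
begin

sublocale Q: prob_space Q
  by (rule prob_space_Q)

sublocale QU: pair_sigma_finite Q uniform01
  by (simp add: pair_sigma_finite_def Q.sigma_finite_measure_axioms prob_space_uniform01 prob_space_imp_sigma_finite)

definition pure_payoff :: "'a \<Rightarrow> real \<Rightarrow> real" where
  "pure_payoff \<omega> u = pathwise_payoff (g \<omega>) (h \<omega>) (cdf_unif01 (\<lambda>v. \<gamma> \<omega> u)) (cdf_unif01 (\<gamma>' \<omega>))"

lemma measurable_sections:
  assumes "\<omega> \<in> space Q"
  shows "\<gamma> \<omega> \<in> borel_measurable uniform01" "\<gamma>' \<omega> \<in> borel_measurable uniform01"
    "g \<omega> \<in> borel_measurable (restrict_space borel {0..})" "h \<omega> \<in> borel_measurable (restrict_space borel {0..})"
  using measurable_Pair2[OF \<gamma> assms] measurable_Pair2[OF \<gamma>' assms] measurable_Pair2[OF g assms]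
    measurable_Pair2[OF h assms] by simp_all

lemma abs_le_enn2real_bounds:
  assumes "\<omega> \<in> space Q" "0 \<le> t" "Bg \<omega> < \<infinity>" "Bh \<omega> < \<infinity>"
  shows "\<bar>g \<omega> t\<bar> \<le> enn2real (Bg \<omega>)" "\<bar>h \<omega> t\<bar> \<le> enn2real (Bh \<omega>)"
  using enn2real_mono[OF g_le[OF assms(1,2)]] enn2real_mono[OF h_le[OF assms(1,2)]] assms(3,4) by simp_all

lemma borel_measurable_pure_payoff: "(\<lambda>(\<omega>, u). pure_payoff \<omega> u) \<in> borel_measurable (Q \<Otimes>\<^sub>M uniform01)"
  unfolding pure_payoff_def split_beta'
  by (rule borel_measurable_pathwise_payoff[where T="\<lambda>z v. \<gamma> (fst z) (snd z)" and T'="\<lambda>z. \<gamma>' (fst z)"])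
    measurable

lemma abs_pure_payoff_le:
  assumes "\<omega> \<in> space Q"
  shows "ennreal \<bar>pure_payoff \<omega> u\<bar> \<le> Bg \<omega> + Bh \<omega>"
proof (cases "Bg \<omega> < \<infinity> \<and> Bh \<omega> < \<infinity>")
  case True
  then have "\<bar>pure_payoff \<omega> u\<bar> \<le> enn2real (Bg \<omega>) + enn2real (Bh \<omega>)"
    unfolding pure_payoff_def using assms abs_le_enn2real_bounds
    by (intro abs_pathwise_payoff_le) (simp_all add: measurable_sections)
  then have "ennreal \<bar>pure_payoff \<omega> u\<bar> \<le> ennreal (enn2real (Bg \<omega>) + enn2real (Bh \<omega>))"
    by (rule ennreal_leI)
  with True show ?thesis
    by (simp add: ennreal_plus)
next
  case False
  then have "Bg \<omega> = \<top> \<or> Bh \<omega> = \<top>"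
    by (simp add: less_top[symmetric])
  then show ?thesis
    by auto
qed

lemma integrable_pure_payoff: "integrable (Q \<Otimes>\<^sub>M uniform01) (\<lambda>(\<omega>, u). pure_payoff \<omega> u)"
proof (rule integrable_pair_measure_dominated_fst[OF prob_space_uniform01 borel_measurable_pure_payoff])
  show "(\<integral>\<^sup>+\<omega>. Bg \<omega> + Bh \<omega> \<partial>Q) < \<infinity>"
    using integral_Bg integral_Bh by (simp add: nn_integral_add)
qed (simp_all add: abs_pure_payoff_le)

lemma AE_pathwise_payoff_eq_integral_pure_payoff:
  "AE \<omega> in Q. pathwise_payoff (g \<omega>) (h \<omega>) (rst_cdf \<gamma> \<omega>) (rst_cdf \<gamma>' \<omega>) = (\<integral>u. pure_payoff \<omega> u \<partial>uniform01)"
proof -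
  have "AE \<omega> in Q. Bg \<omega> \<noteq> \<infinity> \<and> Bh \<omega> \<noteq> \<infinity>"
    using nn_integral_PInf_AE[OF Bg] nn_integral_PInf_AE[OF Bh] integral_Bg integral_Bh by auto
  with AE_space show ?thesis
  proof eventually_elim
    case (elim \<omega>)
    then show ?case
      unfolding pure_payoff_def rst_cdf_eq_cdf_unif01
      by (intro pathwise_payoff_mixture[where Bg="enn2real (Bg \<omega>)" and Bh="enn2real (Bh \<omega>)"])
        (simp_all add: measurable_sections abs_le_enn2real_bounds less_top)
  qed
qed

lemma integral_pathwise_payoff_eq_integral_pure:
  "(\<integral>\<omega>. pathwise_payoff (g \<omega>) (h \<omega>) (rst_cdf \<gamma> \<omega>) (rst_cdf \<gamma>' \<omega>) \<partial>Q)
     = (\<integral>u. \<integral>\<omega>. pathwise_payoff (g \<omega>) (h \<omega>) (pure_cdf (\<lambda>\<omega>. \<gamma> \<omega> u) \<omega>) (rst_cdf \<gamma>' \<omega>) \<partial>Q \<partial>uniform01)"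
proof -
  have "(\<lambda>\<omega>. pathwise_payoff (g \<omega>) (h \<omega>) (rst_cdf \<gamma> \<omega>) (rst_cdf \<gamma>' \<omega>)) \<in> borel_measurable Q"
    unfolding rst_cdf_eq_cdf_unif01 by (rule borel_measurable_pathwise_payoff) measurable
  then have "(\<integral>\<omega>. pathwise_payoff (g \<omega>) (h \<omega>) (rst_cdf \<gamma> \<omega>) (rst_cdf \<gamma>' \<omega>) \<partial>Q)
      = (\<integral>\<omega>. \<integral>u. pure_payoff \<omega> u \<partial>uniform01 \<partial>Q)"
    using AE_pathwise_payoff_eq_integral_pure_payoff borel_measurable_pure_payoff
    by (intro integral_cong_AE) simp_all
  also have "\<dots> = (\<integral>u. \<integral>\<omega>. pure_payoff \<omega> u \<partial>Q \<partial>uniform01)"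
    using QU.Fubini_integral[OF integrable_pure_payoff] by simp
  finally show ?thesis
    by (simp add: pure_payoff_def pure_cdf_eq_cdf_unif01 rst_cdf_eq_cdf_unif01)
qed

theorem integral_pathwise_payoff_le_SUP_pure:
  assumes "AE u in uniform01. (\<lambda>\<omega>. \<gamma> \<omega> u) \<in> S"
  shows "ereal (\<integral>\<omega>. pathwise_payoff (g \<omega>) (h \<omega>) (rst_cdf \<gamma> \<omega>) (rst_cdf \<gamma>' \<omega>) \<partial>Q)
      \<le> (SUP \<tau>\<in>S. ereal (\<integral>\<omega>. pathwise_payoff (g \<omega>) (h \<omega>) (pure_cdf \<tau> \<omega>) (rst_cdf \<gamma>' \<omega>) \<partial>Q))"
  unfolding integral_pathwise_payoff_eq_integral_pure
proof (rule uniform01.ereal_integral_le)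
  show "integrable uniform01
      (\<lambda>u. \<integral>\<omega>. pathwise_payoff (g \<omega>) (h \<omega>) (pure_cdf (\<lambda>\<omega>. \<gamma> \<omega> u) \<omega>) (rst_cdf \<gamma>' \<omega>) \<partial>Q)"
    using QU.integrable_snd[OF integrable_pure_payoff]
    by (simp add: pure_payoff_def pure_cdf_eq_cdf_unif01 rst_cdf_eq_cdf_unif01)
  show "AE u in uniform01.
      ereal (\<integral>\<omega>. pathwise_payoff (g \<omega>) (h \<omega>) (pure_cdf (\<lambda>\<omega>. \<gamma> \<omega> u) \<omega>) (rst_cdf \<gamma>' \<omega>) \<partial>Q)
        \<le> (SUP \<tau>\<in>S. ereal (\<integral>\<omega>. pathwise_payoff (g \<omega>) (h \<omega>) (pure_cdf \<tau> \<omega>) (rst_cdf \<gamma>' \<omega>) \<partial>Q))"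
    using assms by eventually_elim (rule SUP_upper)
qed

end

lemma
  fixes X :: "real \<Rightarrow> 'a \<Rightarrow> real" and R :: "real \<Rightarrow> real"
  assumes X: "\<And>t. 0 \<le> t \<Longrightarrow> X t \<in> borel_measurable M"
    and cont: "\<And>\<omega>. \<omega> \<in> space M \<Longrightarrow> continuous_on {0..} (\<lambda>t. X t \<omega>)"
    and range: "\<And>\<omega> t. \<omega> \<in> space M \<Longrightarrow> 0 \<le> t \<Longrightarrow> X t \<omega> \<in> I"
    and R: "continuous_on I R"
  shows borel_measurable_discounted_process:
      "(\<lambda>(\<omega>, t). exp (- r * t) * R (X t \<omega>)) \<in> borel_measurable (M \<Otimes>\<^sub>M restrict_space borel {0..})"
    and borel_measurable_SUP_discounted_process:
      "(\<lambda>\<omega>. SUP t\<in>{0..}. ennreal (exp (- r * t) * \<bar>R (X t \<omega>)\<bar>)) \<in> borel_measurable M"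
proof -
  have R_X: "(\<lambda>\<omega>. R (X t \<omega>)) \<in> borel_measurable M" if "0 \<le> t" for t
    using measurable_compose[OF measurable_restrict_space2[OF _ X[OF that]] borel_measurable_continuous_on_restrict[OF R]]
      range that by auto
  have meas: "(\<lambda>\<omega>. exp (- r * t) * R (X t \<omega>)) \<in> borel_measurable M" if "0 \<le> t" for t
    using R_X[OF that] by measurable
  have path: "continuous_on {0..} (\<lambda>t. exp (- r * t) * R (X t \<omega>))" if "\<omega> \<in> space M" for \<omega>
    using range that by (intro continuous_intros continuous_on_compose2[OF R cont]) auto
  show "(\<lambda>(\<omega>, t). exp (- r * t) * R (X t \<omega>)) \<in> borel_measurable (M \<Otimes>\<^sub>M restrict_space borel {0..})"
    by (rule borel_measurable_continuous_process[OF meas path])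
  have "(\<lambda>\<omega>. SUP q\<in>{q\<in>\<rat>. 0 \<le> q}. ennreal (exp (- r * q) * \<bar>R (X q \<omega>)\<bar>)) \<in> borel_measurable M"
  proof (rule borel_measurable_SUP)
    show "(\<lambda>\<omega>. ennreal (exp (- r * q) * \<bar>R (X q \<omega>)\<bar>)) \<in> borel_measurable M" if "q \<in> {q\<in>\<rat>. 0 \<le> q}" for q
      using R_X[of q] that by simp
  qed (auto intro: countable_subset[OF _ countable_rat])
  moreover have "(SUP q\<in>{q\<in>\<rat>. 0 \<le> q}. ennreal (exp (- r * q) * \<bar>R (X q \<omega>)\<bar>))
      = (SUP t\<in>{0..}. ennreal (exp (- r * t) * \<bar>R (X t \<omega>)\<bar>))" if "\<omega> \<in> space M" for \<omega>
  proof (rule SUP_nonneg_Rats_eq_SUP_nonneg)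
    show "continuous_on {0..} (\<lambda>t. exp (- r * t) * \<bar>R (X t \<omega>)\<bar>)"
      using continuous_on_rabs[OF path[OF that]] by (simp add: abs_mult)
  qed
  ultimately show "(\<lambda>\<omega>. SUP t\<in>{0..}. ennreal (exp (- r * t) * \<bar>R (X t \<omega>)\<bar>)) \<in> borel_measurable M"
    by (simp cong: measurable_cong)
qed

lemma randomized_stopping_time_measurable:
  assumes "randomized_stopping_time F M \<gamma>" "sets Q = sets M"
  shows "(\<lambda>(\<omega>, u). \<gamma> \<omega> u) \<in> borel_measurable (Q \<Otimes>\<^sub>M uniform01)"
proof -
  have "sets (Q \<Otimes>\<^sub>M uniform01) = sets (M \<Otimes>\<^sub>M restrict_space borel {0..1})"
    using assms(2) sets_uniform01 by (rule sets_pair_measure_cong)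
  with assms(1) show ?thesis
    unfolding randomized_stopping_time_def by (simp cong: measurable_cong_sets)
qed

lemma AE_randomized_stopping_time:
  "randomized_stopping_time F M \<gamma> \<Longrightarrow> AE u in uniform01. (\<lambda>\<omega>. \<gamma> \<omega> u) \<in> {\<tau>. stopping_time F \<tau>}"
  unfolding randomized_stopping_time_def uniform01_def by simp

lemma payoff_randomized_le_SUP_pure:
  fixes X :: "real \<Rightarrow> 'a \<Rightarrow> real" and R G :: "real \<Rightarrow> real"
  assumes P: "prob_space (P x)" "sets (P x) = sets M"
    and X: "\<And>t. 0 \<le> t \<Longrightarrow> X t \<in> borel_measurable M"
    and cont: "\<And>\<omega>. \<omega> \<in> space M \<Longrightarrow> continuous_on {0..} (\<lambda>t. X t \<omega>)"
    and range: "\<And>\<omega> t. \<omega> \<in> space M \<Longrightarrow> 0 \<le> t \<Longrightarrow> X t \<omega> \<in> I"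
    and R: "continuous_on I R" and G: "continuous_on I G"
    and int_R: "(\<integral>\<^sup>+\<omega>. (SUP t\<in>{0..}. ennreal (exp (- r * t) * \<bar>R (X t \<omega>)\<bar>)) \<partial>P x) < \<infinity>"
    and int_G: "(\<integral>\<^sup>+\<omega>. (SUP t\<in>{0..}. ennreal (exp (- r * t) * \<bar>G (X t \<omega>)\<bar>)) \<partial>P x) < \<infinity>"
    and \<gamma>: "randomized_stopping_time F M \<gamma>" and \<gamma>': "randomized_stopping_time F M \<gamma>'"
  shows "ereal (payoff P X r R G x (rst_cdf \<gamma>) (rst_cdf \<gamma>'))
     \<le> (SUP \<tau>\<in>{\<tau>. stopping_time F \<tau>}. ereal (payoff P X r R G x (pure_cdf \<tau>) (rst_cdf \<gamma>')))"
  unfolding payoff_eq_integral_pathwise_payoff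
proof (rule randomized_payoff.integral_pathwise_payoff_le_SUP_pure[OF randomized_payoff.intro[OF P(1)
      randomized_stopping_time_measurable[OF \<gamma> P(2)] randomized_stopping_time_measurable[OF \<gamma>' P(2)]
      _ _ _ int_R _ _ int_G] AE_randomized_stopping_time[OF \<gamma>]])
  have sets: "sets (P x \<Otimes>\<^sub>M restrict_space borel {0..}) = sets (M \<Otimes>\<^sub>M restrict_space borel {0..})"
    using P(2) by (rule sets_pair_measure_cong) simp
  show "(\<lambda>(\<omega>, t). exp (- r * t) * R (X t \<omega>)) \<in> borel_measurable (P x \<Otimes>\<^sub>M restrict_space borel {0..})"
    "(\<lambda>(\<omega>, t). exp (- r * t) * G (X t \<omega>)) \<in> borel_measurable (P x \<Otimes>\<^sub>M restrict_space borel {0..})"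
    using borel_measurable_discounted_process[OF X cont range R] borel_measurable_discounted_process[OF X cont range G]
    by (simp_all cong: measurable_cong_sets add: sets)
  show "(\<lambda>\<omega>. SUP t\<in>{0..}. ennreal (exp (- r * t) * \<bar>R (X t \<omega>)\<bar>)) \<in> borel_measurable (P x)"
    "(\<lambda>\<omega>. SUP t\<in>{0..}. ennreal (exp (- r * t) * \<bar>G (X t \<omega>)\<bar>)) \<in> borel_measurable (P x)"
    using borel_measurable_SUP_discounted_process[OF X cont range R]
      borel_measurable_SUP_discounted_process[OF X cont range G]
    by (simp_all cong: measurable_cong_sets add: P(2))
qed (auto simp: abs_mult intro!: SUP_upper2)

theorem lemma4:
  fixes M :: "'a measure" and F :: "ennreal \<Rightarrow> 'a measure" and P :: "real \<Rightarrow> 'a measure"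
    and X :: "real \<Rightarrow> 'a \<Rightarrow> real" and I :: "real set" and r :: real
    and R1 G1 R2 G2 :: "real \<Rightarrow> real" and x :: real
    and \<gamma>1 \<gamma>2 :: "'a \<Rightarrow> real \<Rightarrow> ennreal"
  assumes I: "open I" "is_interval I" "I \<noteq> {}"
    and filt: "filtration (space M) F" "\<And>t. sets (F t) \<subseteq> sets M"
    and P: "\<And>y. y \<in> I \<Longrightarrow> prob_space (P y)" "\<And>y. y \<in> I \<Longrightarrow> sets (P y) = sets M"
    and adapted: "\<And>t. 0 \<le> t \<Longrightarrow> X t \<in> borel_measurable (F (ennreal t))"
    and cont: "\<And>\<omega>. \<omega> \<in> space M \<Longrightarrow> continuous_on {0..} (\<lambda>t. X t \<omega>)"
    and range: "\<And>\<omega> t. \<omega> \<in> space M \<Longrightarrow> 0 \<le> t \<Longrightarrow> X t \<omega> \<in> I"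
    and start: "\<And>y. y \<in> I \<Longrightarrow> AE \<omega> in P y. X 0 \<omega> = y"
    and r: "r > 0"
    and cR: "continuous_on I R1" "continuous_on I R2"
    and cG: "continuous_on I G1" "continuous_on I G2"
    and intR: "\<And>y. y \<in> I \<Longrightarrow> (\<integral>\<^sup>+\<omega>. (SUP t\<in>{0..}. ennreal (exp (- r * t) * \<bar>R1 (X t \<omega>)\<bar>)) \<partial>P y) < \<infinity>"
              "\<And>y. y \<in> I \<Longrightarrow> (\<integral>\<^sup>+\<omega>. (SUP t\<in>{0..}. ennreal (exp (- r * t) * \<bar>R2 (X t \<omega>)\<bar>)) \<partial>P y) < \<infinity>"
    and intG: "\<And>y. y \<in> I \<Longrightarrow> (\<integral>\<^sup>+\<omega>. (SUP t\<in>{0..}. ennreal (exp (- r * t) * \<bar>G1 (X t \<omega>)\<bar>)) \<partial>P y) < \<infinity>"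
              "\<And>y. y \<in> I \<Longrightarrow> (\<integral>\<^sup>+\<omega>. (SUP t\<in>{0..}. ennreal (exp (- r * t) * \<bar>G2 (X t \<omega>)\<bar>)) \<partial>P y) < \<infinity>"
    and x: "x \<in> I"
    and rst: "randomized_stopping_time F M \<gamma>1" "randomized_stopping_time F M \<gamma>2"
  shows "ereal (payoff P X r R1 G1 x (rst_cdf \<gamma>1) (rst_cdf \<gamma>2))
           \<le> (SUP \<tau>\<in>{\<tau>. stopping_time F \<tau>}. ereal (payoff P X r R1 G1 x (pure_cdf \<tau>) (rst_cdf \<gamma>2)))
       \<and> ereal (payoff P X r R2 G2 x (rst_cdf \<gamma>2) (rst_cdf \<gamma>1))
           \<le> (SUP \<tau>\<in>{\<tau>. stopping_time F \<tau>}. ereal (payoff P X r R2 G2 x (pure_cdf \<tau>) (rst_cdf \<gamma>1)))"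
proof -
  have X: "X t \<in> borel_measurable M" if "0 \<le> t" for t
    by (rule measurable_from_subalg[OF _ adapted[OF that]])
      (auto simp: subalgebra_def filt(2) filtration.space_F[OF filt(1)])
  show ?thesis
    using payoff_randomized_le_SUP_pure[where P=P and x=x, OF P[OF x] X cont range cR(1) cG(1) intR(1)[OF x] intG(1)[OF x] rst]
      payoff_randomized_le_SUP_pure[where P=P and x=x, OF P[OF x] X cont range cR(2) cG(2) intR(2)[OF x] intG(2)[OF x] rst(2,1)]
    by blast
qed

end
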